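(* Fix $\epsilon>0$, $\delta>0$ and an integer $L\geq 2$ such that $2\epsilon<\delta\leq 1/L$. Then the Opportunistic Bisection strategy (which uses $2L+\lceil\log(1/(\epsilon L))\rceil$ queries) is $(\epsilon,\delta,L)$-private.
   Context: Model: unknown true value $v^*\in[0,1)$; a learner submits queries $q_k\in[0,1)$ and receives $r_k=\mathbb{I}(v^*\geq q_k)$. A learner strategy of length $N$ uses a random seed $Y$ uniform on $\{1,\dots,\mathcal{Y}\}$, with $q_1=\phi_1(Y)$, $q_k=\phi_k(r_1,\dots,r_{k-1},Y)$, and estimate $\hat x=\phi^E(r_1,\dots,r_N,Y)$. $\mathcal{Q}(x)$ is the set of query sequences with positive probability (over $Y$) when $v^*=x$; information set $\mathcal{I}(\overline q)=\{x\in[0,1):\overline q\in\mathcal{Q}(x)\}$. $C_\delta(\mathcal{E})$ is the least number of closed intervals of length at most $\delta$ covering $\mathcal{E}$. A strategy is $(\epsilon,\delta,L)$-private if $\mathbb{P}(|\hat x(x,Y)-x|\leq\epsilon/2)=1$ for all $x\in[0,1)$ and $C_\delta(\mathcal{I}(\overline q))\geq L$ for all $x$ and all $\overline q\in\mathcal{Q}(x)$. Bisection searches: for an interval $\mathcal{J}$ and $M\in\mathbb{N}$, set $\mathcal{J}_1=\mathcal{J}$, $q_i=$ midpoint of $\mathcal{J}_i$, and $\mathcal{J}_{i+1}=[\inf\mathcal{J}_i,q_i)$ or $[q_i,\sup\mathcal{J}_i)$ according as a bit $b_i$ is 0 or 1, for $i=1,\dots,M$. It is a truthful bisection search if $b_i=r_i$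 (the response to $q_i$), and a fictitious bisection search if $b_i=Z_i$ where $Z_1,Z_2,\dots$ are i.i.d. Bernoulli(1/2) generated from $Y$. Opportunistic Bisection strategy: Phase 1: $q_i=(i-1)/L$ for $i=1,\dots,L$, and $q_{L+i}=q_i+\epsilon$ for $i=1,\dots,L$; the intervals $[q_i,q_{i+L})$ are called guesses. Let the sub-intervals be $\mathcal{J}^{(i)}=[(i-1)/L+\epsilon,\ i/L)$, $i=1,\dots,L$. Phase 2 (queries $q_{2L+1},\dots,q_{2L+M}$ with $M=\lceil\log(1/(\epsilon L))\rceil$, log base 2): if no guess contains $v^*$, perform a truthful bisection search of the sub-interval $\mathcal{J}^*$ containing $v^*$; if some guess contains $v^*$, choose a sub-interval uniformly at random (using $Y$) and perform a fictitious bisection search of it. The estimate is the midpoint of the guess containing $v^*$ in the latter case, and otherwise the midpoint of the final interval of the truthful search (the interval adjacent to $q_N$ known to contain $v^*$). *)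

theory Defs
  imports "HOL-Probability.Probability"
begin

text \<open>A learner strategy of length N with seed Y uniform on {1..nseeds}.
  query k rs y is q_k = phi_k(r_1,...,r_{k-1},Y) (k >= 1, rs has length k-1),
  est rs y is the estimate phi^E(r_1,...,r_N,Y).\<close>

record strategy =
  nseeds :: nat
  len :: nat
  query :: "nat \<Rightarrow> bool list \<Rightarrow> nat \<Rightarrow> real"
  est :: "bool list \<Rightarrow> nat \<Rightarrow> real"

fun resps :: "(nat \<Rightarrow> bool list \<Rightarrow> nat \<Rightarrow> real) \<Rightarrow> real \<Rightarrow> nat \<Rightarrow> nat \<Rightarrow> bool list" where
  "resps \<phi> x y 0 = []"
| "resps \<phi> x y (Suc k) = (let rs = resps \<phi> x y k in rs @ [x \<ge> \<phi> (Suc k) rs y])"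

definition qseq :: "strategy \<Rightarrow> real \<Rightarrow> nat \<Rightarrow> real list" where
  "qseq S x y = map (\<lambda>k. query S k (resps (query S) x y (k - 1)) y) [1..<len S + 1]"

definition estimate :: "strategy \<Rightarrow> real \<Rightarrow> nat \<Rightarrow> real" where
  "estimate S x y = est S (resps (query S) x y (len S)) y"

definition seed_pmf :: "strategy \<Rightarrow> nat pmf" where
  "seed_pmf S = pmf_of_set {1..nseeds S}"

definition Qset :: "strategy \<Rightarrow> real \<Rightarrow> real list set" where
  "Qset S x = {qb. measure_pmf.prob (seed_pmf S) {y. qseq S x y = qb} > 0}"

definition info_set :: "strategy \<Rightarrow> real list \<Rightarrow> real set" where
  "info_set S qb = {x. 0 \<le> x \<and> x < 1 \<and> qb \<in> Qset S x}"

definition cover_num :: "real \<Rightarrow> real set \<Rightarrow> nat" where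
  "cover_num \<delta> E = (LEAST n. \<exists>a b :: nat \<Rightarrow> real.
      (\<forall>i<n. b i - a i \<le> \<delta>) \<and> E \<subseteq> (\<Union>i<n. {a i..b i}))"

definition is_private :: "strategy \<Rightarrow> real \<Rightarrow> real \<Rightarrow> nat \<Rightarrow> bool" where
  "is_private S \<epsilon> \<delta> L \<longleftrightarrow>
     (\<forall>x. 0 \<le> x \<and> x < 1 \<longrightarrow>
        measure_pmf.prob (seed_pmf S) {y. \<bar>estimate S x y - x\<bar> \<le> \<epsilon> / 2} = 1) \<and>
     (\<forall>x. 0 \<le> x \<and> x < 1 \<longrightarrow>
        (\<forall>qb \<in> Qset S x. cover_num \<delta> (info_set S qb) \<ge> L))"

text \<open>Intervals [a,b) represented as pairs (a,b). Bit True means upper half [q,b).\<close>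
fun bisect :: "real \<times> real \<Rightarrow> bool list \<Rightarrow> real \<times> real" where
  "bisect J [] = J"
| "bisect (a, b) (c # cs) = bisect (if c then ((a + b) / 2, b) else (a, (a + b) / 2)) cs"

definition midpt :: "real \<times> real \<Rightarrow> real" where
  "midpt J = (fst J + snd J) / 2"

definition ob_M :: "real \<Rightarrow> nat \<Rightarrow> nat" where
  "ob_M \<epsilon> L = nat \<lceil>log 2 (1 / (\<epsilon> * real L))\<rceil>"

text \<open>Seed y in {1..L*2^M} encodes a uniformly random sub-interval index in {1..L}
  and independent fair bits Z_1..Z_M.\<close>
definition ob_subidx :: "nat \<Rightarrow> nat \<Rightarrow> nat" where
  "ob_subidx L y = (y - 1) mod L + 1"

definition ob_Z :: "nat \<Rightarrow> nat \<Rightarrow> nat \<Rightarrow> bool" where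
  "ob_Z L y k = odd (((y - 1) div L) div 2 ^ (k - 1))"

definition ob_sub :: "real \<Rightarrow> nat \<Rightarrow> nat \<Rightarrow> real \<times> real" where
  "ob_sub \<epsilon> L i = (real (i - 1) / real L + \<epsilon>, real i / real L)"

text \<open>Index j with v* in [(j-1)/L, j/L): the number of positive responses to q_1..q_L.\<close>
definition ob_j :: "nat \<Rightarrow> bool list \<Rightarrow> nat" where
  "ob_j L rs = length (filter id (take L rs))"

text \<open>v* lies in guess j iff the response to q_{L+j} = (j-1)/L + eps is negative.\<close>
definition ob_in_guess :: "nat \<Rightarrow> bool list \<Rightarrow> bool" where
  "ob_in_guess L rs \<longleftrightarrow> \<not> rs ! (L + ob_j L rs - 1)"

definition ob_query :: "real \<Rightarrow> nat \<Rightarrow> nat \<Rightarrow> bool list \<Rightarrow> nat \<Rightarrow> real" where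
  "ob_query \<epsilon> L k rs y =
     (if k \<le> L then real (k - 1) / real L
      else if k \<le> 2 * L then real (k - L - 1) / real L + \<epsilon>
      else (let m = k - 2 * L in
        if ob_in_guess L rs
        then midpt (bisect (ob_sub \<epsilon> L (ob_subidx L y)) (map (ob_Z L y) [1..<m]))
        else midpt (bisect (ob_sub \<epsilon> L (ob_j L rs)) (take (m - 1) (drop (2 * L) rs)))))"

definition ob_est :: "real \<Rightarrow> nat \<Rightarrow> bool list \<Rightarrow> nat \<Rightarrow> real" where
  "ob_est \<epsilon> L rs y =
     (if ob_in_guess L rs then real (ob_j L rs - 1) / real L + \<epsilon> / 2
      else midpt (bisect (ob_sub \<epsilon> L (ob_j L rs)) (drop (2 * L) rs)))"

definition OB :: "real \<Rightarrow> nat \<Rightarrow> strategy" where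
  "OB \<epsilon> L = \<lparr> nseeds = L * 2 ^ ob_M \<epsilon> L, len = 2 * L + ob_M \<epsilon> L,
               query = ob_query \<epsilon> L, est = ob_est \<epsilon> L \<rparr>"

end

theory Submission
  imports Defs
begin

(* The first 2L queries locate v* in its cell [(j-1)/L, j/L) and test whether it lies in the
   guess [(j-1)/L, (j-1)/L + eps) of that cell. In a guess, the midpoint of the guess is
   eps/2-accurate; otherwise v* lies in the sub-interval of length 1/L - eps, which M truthful
   halvings shrink to length at most eps. For privacy, every query sequence that can occur is the
   fixed first phase followed by the bisection of some sub-interval i along some bits bs, and the
   seed encoding (i, bs) produces exactly this sequence, as a fictitious search, whenever v* lies
   in any guess. Hence every information set contains all L guesses, which contain L points
   pairwise more than 1/L >= delta apart, and no L - 1 intervals of length delta cover them. *)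

lemma length_resps [simp]: "length (resps \<phi> x y k) = k"
  by (induction k) (simp_all add: Let_def)

lemma take_resps: "k' \<le> k \<Longrightarrow> take k' (resps \<phi> x y k) = resps \<phi> x y k'"
proof (induction k)
  case (Suc k)
  then show ?case
    by (cases "k' = Suc k") (simp_all add: Let_def le_Suc_eq)
qed simp

lemma nth_resps: "i < k \<Longrightarrow> resps \<phi> x y k ! i = (\<phi> (Suc i) (resps \<phi> x y i) y \<le> x)"
proof -
  assume "i < k"
  then have "resps \<phi> x y k ! i = resps \<phi> x y (Suc i) ! i"
    by (metis Suc_leI lessI nth_take take_resps)
  then show ?thesis by (simp add: Let_def nth_append)
qed

lemma set_seed_pmf: "nseeds S \<ge> 1 \<Longrightarrow> set_pmf (seed_pmf S) = {1..nseeds S}"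
  by (simp add: seed_pmf_def)

lemma Qset_iff:
  assumes "nseeds S \<ge> 1"
  shows "qb \<in> Qset S x \<longleftrightarrow> (\<exists>y\<in>{1..nseeds S}. qseq S x y = qb)"
proof -
  have "measure_pmf.prob (seed_pmf S) {y. qseq S x y = qb} > 0 \<longleftrightarrow>
      set_pmf (seed_pmf S) \<inter> {y. qseq S x y = qb} \<noteq> {}"
    by (metis measure_pmf_zero_iff measure_nonneg order_less_le)
  then show ?thesis unfolding Qset_def using set_seed_pmf[OF assms] by auto
qed

lemma prob_seed_pmf_eq_1:
  assumes "nseeds S \<ge> 1" and "\<And>y. y \<in> {1..nseeds S} \<Longrightarrow> P y"
  shows "measure_pmf.prob (seed_pmf S) {y. P y} = 1"
  using assms by (subst measure_pmf.prob_eq_1) (auto simp: AE_measure_pmf_iff set_seed_pmf)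

lemma ex_interval_cover:
  assumes "\<delta> > 0" and "E \<subseteq> {a..b}"
  shows "\<exists>n :: nat. \<exists>lo hi. (\<forall>i<n. hi i - lo i \<le> \<delta>) \<and> E \<subseteq> (\<Union>i<n. {lo i..hi i :: real})"
proof -
  define n where "n = nat \<lceil>(b - a) / \<delta>\<rceil> + 1"
  define lo where "lo i = a + real i * \<delta>" for i
  have "E \<subseteq> (\<Union>i<n. {lo i..lo (Suc i)})"
  proof
    fix x assume "x \<in> E"
    then have x: "a \<le> x" "x \<le> b" using assms(2) by auto
    define i where "i = nat \<lfloor>(x - a) / \<delta>\<rfloor>"
    have "(x - a) / \<delta> \<le> (b - a) / \<delta>" using x assms(1) by (simp add: divide_right_mono)
    then have fl: "0 \<le> \<lfloor>(x - a) / \<delta>\<rfloor>" "\<lfloor>(x - a) / \<delta>\<rfloor> \<le> \<lceil>(b - a) / \<delta>\<rceil>"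
      using x assms(1) by (auto intro: order.trans[OF floor_mono floor_le_ceiling])
    then have "real i \<le> (x - a) / \<delta>" "(x - a) / \<delta> \<le> real i + 1"
      unfolding i_def by linarith+
    then have "x \<in> {lo i..lo (Suc i)}"
      using assms(1) by (simp add: lo_def field_simps)
    moreover have "i < n" using fl unfolding i_def n_def by linarith
    ultimately show "x \<in> (\<Union>i<n. {lo i..lo (Suc i)})" by auto
  qed
  moreover have "\<forall>i<n. lo (Suc i) - lo i \<le> \<delta>" by (simp add: lo_def algebra_simps)
  ultimately show ?thesis by (intro exI[of _ n] exI[of _ lo] exI[of _ "\<lambda>i. lo (Suc i)"] conjI)
qed

lemma card_separated_le_cover:
  fixes P :: "real set"
  assumes "\<forall>i<n. hi i - lo i \<le> \<delta>" and "P \<subseteq> (\<Union>i<n. {lo i..hi i})"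
    and separated: "\<And>p q. p \<in> P \<Longrightarrow> q \<in> P \<Longrightarrow> p \<noteq> q \<Longrightarrow> \<delta> < \<bar>p - q\<bar>"
  shows "card P \<le> n"
proof -
  have "\<forall>p\<in>P. \<exists>i<n. p \<in> {lo i..hi i}" using assms(2) by blast
  then obtain f where f: "\<And>p. p \<in> P \<Longrightarrow> f p < n \<and> p \<in> {lo (f p)..hi (f p)}"
    by metis
  have "inj_on f P"
  proof (rule inj_onI, rule ccontr)
    fix p q assume "p \<in> P" "q \<in> P" "f p = f q" "p \<noteq> q"
    then have "\<bar>p - q\<bar> \<le> \<delta>" using f[of p] f[of q] assms(1) by fastforce
    with separated[of p q] \<open>p \<in> P\<close> \<open>q \<in> P\<close> \<open>p \<noteq> q\<close> show False by linarith
  qed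
  moreover have "f ` P \<subseteq> {..<n}" using f by auto
  ultimately have "card P \<le> card {..<n}" by (intro card_inj_on_le) auto
  then show ?thesis by simp
qed

lemma card_separated_le_cover_num:
  assumes "\<delta> > 0" and "E \<subseteq> {a..b}" and "P \<subseteq> E"
    and "\<And>p q. p \<in> P \<Longrightarrow> q \<in> P \<Longrightarrow> p \<noteq> q \<Longrightarrow> \<delta> < \<bar>p - q\<bar>"
  shows "card P \<le> cover_num \<delta> E"
proof -
  let ?covers = "\<lambda>n. \<exists>lo hi. (\<forall>i<n. hi i - lo i \<le> \<delta>) \<and> E \<subseteq> (\<Union>i<n. {lo i..hi i})"
  have "?covers (cover_num \<delta> E)"
    unfolding cover_num_def using ex_interval_cover[OF assms(1,2)] by (rule LeastI_ex)
  then obtain lo hi where "\<forall>i<cover_num \<delta> E. hi i - lo i \<le> \<delta>"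
      and "P \<subseteq> (\<Union>i<cover_num \<delta> E. {lo i..hi i})"
    using assms(3) by blast
  then show ?thesis using assms(4) by (rule card_separated_le_cover)
qed

lemma bisect_width:
  "snd (bisect J bs) - fst (bisect J bs) = (snd J - fst J) / 2 ^ length bs"
proof (induction bs arbitrary: J)
  case (Cons c cs)
  obtain a b where "J = (a, b)" by fastforce
  then show ?case
    using Cons.IH[of "if c then ((a + b) / 2, b) else (a, (a + b) / 2)"] by (auto simp: field_simps)
qed simp

lemma bisect_truthful_mem:
  assumes "\<And>m. m < length bs \<Longrightarrow> bs ! m = (midpt (bisect J (take m bs)) \<le> x)"
    and "fst J \<le> x" "x < snd J"
  shows "fst (bisect J bs) \<le> x \<and> x < snd (bisect J bs)"
  using assms
proof (induction bs arbitrary: J)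
  case (Cons c cs)
  obtain a b where J: "J = (a, b)" by fastforce
  let ?J = "if c then ((a + b) / 2, b) else (a, (a + b) / 2)"
  have c: "c = ((a + b) / 2 \<le> x)" using Cons.prems(1)[of 0] by (simp add: J midpt_def)
  have "fst (bisect ?J cs) \<le> x \<and> x < snd (bisect ?J cs)"
  proof (rule Cons.IH)
    show "cs ! m = (midpt (bisect ?J (take m cs)) \<le> x)" if "m < length cs" for m
      using that Cons.prems(1)[of "Suc m"] by (simp add: J)
    show "fst ?J \<le> x" "x < snd ?J" using c Cons.prems(2,3) by (auto simp: J)
  qed
  then show ?case by (simp add: J)
qed simp

lemma abs_midpt_diff_le:
  assumes "fst J \<le> x" "x < snd J" "snd J - fst J \<le> \<epsilon>"
  shows "\<bar>midpt J - x\<bar> \<le> \<epsilon> / 2"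
  using assms by (auto simp: midpt_def abs_le_iff field_simps)

definition ob_cell :: "nat \<Rightarrow> real \<Rightarrow> nat" where
  "ob_cell L x = nat \<lfloor>x * real L\<rfloor> + 1"

definition ob_guessed :: "real \<Rightarrow> nat \<Rightarrow> real \<Rightarrow> bool" where
  "ob_guessed \<epsilon> L x \<longleftrightarrow> x < real (ob_cell L x - 1) / real L + \<epsilon>"

lemma ob_cell_bounds:
  assumes "L \<ge> 1" "0 \<le> x" "x < 1"
  shows "ob_cell L x \<in> {1..L}" "real (ob_cell L x - 1) / L \<le> x" "x < real (ob_cell L x) / L"
proof -
  have L: "real L > 0" using assms by simp
  have fl: "0 \<le> \<lfloor>x * real L\<rfloor>" "\<lfloor>x * real L\<rfloor> < int L"
    using assms by (simp_all add: floor_less_iff)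
  then show "ob_cell L x \<in> {1..L}" by (simp add: ob_cell_def Suc_le_eq nat_less_iff)
  have "real (ob_cell L x - 1) = \<lfloor>x * real L\<rfloor>" "real (ob_cell L x) = \<lfloor>x * real L\<rfloor> + 1"
    using fl by (simp_all add: ob_cell_def)
  then show "real (ob_cell L x - 1) / L \<le> x" "x < real (ob_cell L x) / L"
    using L by (simp_all add: divide_le_eq less_divide_eq)
qed

lemma ob_cell_eqI:
  assumes "L \<ge> 1" "real k \<le> x * real L" "x * real L < real k + 1"
  shows "ob_cell L x = Suc k"
proof -
  have "\<lfloor>x * real L\<rfloor> = int k" using assms by (simp add: floor_eq_iff)
  then show ?thesis by (simp add: ob_cell_def)
qed

lemma length_filter_grid_le:
  assumes "L \<ge> 1" "0 \<le> x" "x < 1"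
  shows "length (filter (\<lambda>i. real i / real L \<le> x) [0..<L]) = ob_cell L x"
proof -
  have L: "real L > 0" using assms by simp
  have "i < L \<and> real i / real L \<le> x \<longleftrightarrow> i < ob_cell L x" for i
  proof -
    have "real i / real L \<le> x \<longleftrightarrow> int i \<le> \<lfloor>x * real L\<rfloor>"
      using L by (simp add: divide_le_eq le_floor_iff)
    also have "\<dots> \<longleftrightarrow> i < ob_cell L x"
      using assms by (simp add: ob_cell_def less_Suc_eq_le le_nat_iff)
    finally show ?thesis using ob_cell_bounds(1)[OF assms] by auto
  qed
  then have "{i. i < L \<and> real i / real L \<le> x} = {..<ob_cell L x}" by auto
  then show ?thesis by (simp add: length_filter_conv_card cong: conj_cong)
qed

lemma nth_resps_ob_query_cells:
  "i < L \<Longrightarrow> i < k \<Longrightarrow> resps (ob_query \<epsilon> L) x y k ! i = (real i / real L \<le> x)"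
  by (simp add: nth_resps ob_query_def)

lemma nth_resps_ob_query_guesses:
  "L \<le> i \<Longrightarrow> i < 2 * L \<Longrightarrow> i < k \<Longrightarrow>
    resps (ob_query \<epsilon> L) x y k ! i = (real (i - L) / real L + \<epsilon> \<le> x)"
  by (simp add: nth_resps ob_query_def)

lemma ob_j_resps:
  assumes "L \<ge> 1" "L \<le> k" "0 \<le> x" "x < 1"
  shows "ob_j L (resps (ob_query \<epsilon> L) x y k) = ob_cell L x"
proof -
  have "take L (resps (ob_query \<epsilon> L) x y k) = map (\<lambda>i. real i / real L \<le> x) [0..<L]"
    by (rule nth_equalityI) (use assms in \<open>auto simp: nth_resps_ob_query_cells\<close>)
  then show ?thesis
    using length_filter_grid_le[OF assms(1,3,4)] by (simp add: ob_j_def filter_map comp_def)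
qed

lemma ob_in_guess_resps:
  assumes "L \<ge> 1" "2 * L \<le> k" "0 \<le> x" "x < 1"
  shows "ob_in_guess L (resps (ob_query \<epsilon> L) x y k) \<longleftrightarrow> ob_guessed \<epsilon> L x"
proof -
  have "ob_cell L x \<in> {1..L}" using ob_cell_bounds(1)[OF assms(1,3,4)] .
  then show ?thesis using assms
    by (auto simp: ob_in_guess_def ob_guessed_def ob_j_resps nth_resps_ob_query_guesses not_le)
qed

(* Phase 1 is fixed, so a query sequence reveals only the bisected sub-interval and the bits
   of the phase-2 search, whether that search is truthful or fictitious. *)
definition ob_queries :: "real \<Rightarrow> nat \<Rightarrow> nat \<Rightarrow> bool list \<Rightarrow> real list" where
  "ob_queries \<epsilon> L i bs = map (\<lambda>k. if k \<le> L then real (k - 1) / real L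
      else if k \<le> 2 * L then real (k - L - 1) / real L + \<epsilon>
      else midpt (bisect (ob_sub \<epsilon> L i) (take (k - 2 * L - 1) bs))) [1..<2 * L + ob_M \<epsilon> L + 1]"

lemma qseq_OB_eq_ob_queries:
  assumes "\<And>k. 2 * L < k \<Longrightarrow> k \<le> 2 * L + ob_M \<epsilon> L \<Longrightarrow>
      ob_query \<epsilon> L k (resps (ob_query \<epsilon> L) x y (k - 1)) y
        = midpt (bisect (ob_sub \<epsilon> L i) (take (k - 2 * L - 1) bs))"
  shows "qseq (OB \<epsilon> L) x y = ob_queries \<epsilon> L i bs"
proof -
  have "qseq (OB \<epsilon> L) x y
      = map (\<lambda>k. ob_query \<epsilon> L k (resps (ob_query \<epsilon> L) x y (k - 1)) y) [1..<2 * L + ob_M \<epsilon> L + 1]"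
    by (simp add: qseq_def OB_def)
  also have "\<dots> = ob_queries \<epsilon> L i bs"
    unfolding ob_queries_def
  proof (rule map_cong[OF refl])
    fix k assume k: "k \<in> set [1..<2 * L + ob_M \<epsilon> L + 1]"
    show "ob_query \<epsilon> L k (resps (ob_query \<epsilon> L) x y (k - 1)) y =
        (if k \<le> L then real (k - 1) / real L
         else if k \<le> 2 * L then real (k - L - 1) / real L + \<epsilon>
         else midpt (bisect (ob_sub \<epsilon> L i) (take (k - 2 * L - 1) bs)))"
    proof (cases "k \<le> 2 * L")
      case True
      then show ?thesis by (simp add: ob_query_def)
    next
      case False
      with k have "2 * L < k" "k \<le> 2 * L + ob_M \<epsilon> L" by auto
      with False show ?thesis using assms by simp
    qed
  qed
  finally show ?thesis .
qed

lemma qseq_OB_guessed: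
  assumes "L \<ge> 1" "0 \<le> x" "x < 1" "ob_guessed \<epsilon> L x"
  shows "qseq (OB \<epsilon> L) x y = ob_queries \<epsilon> L (ob_subidx L y) (map (ob_Z L y) [1..<ob_M \<epsilon> L + 1])"
proof (rule qseq_OB_eq_ob_queries)
  fix k assume k: "2 * L < k" "k \<le> 2 * L + ob_M \<epsilon> L"
  have "ob_in_guess L (resps (ob_query \<epsilon> L) x y (k - 1))"
    using assms k by (simp add: ob_in_guess_resps)
  moreover have "take (k - 2 * L - 1) (map (ob_Z L y) [1..<ob_M \<epsilon> L + 1]) = map (ob_Z L y) [1..<k - 2 * L]"
    using k by (simp add: take_map Suc_diff_Suc del: upt_Suc)
  ultimately show "ob_query \<epsilon> L k (resps (ob_query \<epsilon> L) x y (k - 1)) y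
      = midpt (bisect (ob_sub \<epsilon> L (ob_subidx L y)) (take (k - 2 * L - 1) (map (ob_Z L y) [1..<ob_M \<epsilon> L + 1])))"
    using k by (simp add: ob_query_def Let_def)
qed

definition ob_phase2_resps :: "real \<Rightarrow> nat \<Rightarrow> real \<Rightarrow> nat \<Rightarrow> bool list" where
  "ob_phase2_resps \<epsilon> L x y = drop (2 * L) (resps (ob_query \<epsilon> L) x y (2 * L + ob_M \<epsilon> L))"

lemma length_ob_phase2_resps [simp]: "length (ob_phase2_resps \<epsilon> L x y) = ob_M \<epsilon> L"
  by (simp add: ob_phase2_resps_def)

lemma ob_query_truthful:
  assumes "L \<ge> 1" "0 \<le> x" "x < 1" "\<not> ob_guessed \<epsilon> L x"
    and "2 * L \<le> n" "n \<le> 2 * L + ob_M \<epsilon> L"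
  shows "ob_query \<epsilon> L (Suc n) (resps (ob_query \<epsilon> L) x y n) y
    = midpt (bisect (ob_sub \<epsilon> L (ob_cell L x)) (take (n - 2 * L) (ob_phase2_resps \<epsilon> L x y)))"
proof -
  let ?rs = "resps (ob_query \<epsilon> L) x y n"
  have "?rs = take n (resps (ob_query \<epsilon> L) x y (2 * L + ob_M \<epsilon> L))"
    using assms(6) by (simp add: take_resps)
  then have phase2: "drop (2 * L) ?rs = take (n - 2 * L) (ob_phase2_resps \<epsilon> L x y)"
    by (simp add: ob_phase2_resps_def drop_take)
  have "\<not> ob_in_guess L ?rs" using assms(1-5) by (simp add: ob_in_guess_resps)
  moreover have "ob_j L ?rs = ob_cell L x" using assms(1-5) by (simp add: ob_j_resps)
  ultimately show ?thesis using assms(5) by (simp add: ob_query_def Let_def phase2)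
qed

lemma qseq_OB_truthful:
  assumes "L \<ge> 1" "0 \<le> x" "x < 1" "\<not> ob_guessed \<epsilon> L x"
  shows "qseq (OB \<epsilon> L) x y = ob_queries \<epsilon> L (ob_cell L x) (ob_phase2_resps \<epsilon> L x y)"
proof (rule qseq_OB_eq_ob_queries)
  fix k assume "2 * L < k" "k \<le> 2 * L + ob_M \<epsilon> L"
  then show "ob_query \<epsilon> L k (resps (ob_query \<epsilon> L) x y (k - 1)) y
      = midpt (bisect (ob_sub \<epsilon> L (ob_cell L x)) (take (k - 2 * L - 1) (ob_phase2_resps \<epsilon> L x y)))"
    using ob_query_truthful[OF assms, of "k - 1" y] by simp
qed

lemma ob_phase2_resps_truthful:
  assumes "L \<ge> 1" "0 \<le> x" "x < 1" "\<not> ob_guessed \<epsilon> L x" "m < ob_M \<epsilon> L"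
  shows "ob_phase2_resps \<epsilon> L x y ! m
    = (midpt (bisect (ob_sub \<epsilon> L (ob_cell L x)) (take m (ob_phase2_resps \<epsilon> L x y))) \<le> x)"
proof -
  have "ob_phase2_resps \<epsilon> L x y ! m = resps (ob_query \<epsilon> L) x y (2 * L + ob_M \<epsilon> L) ! (2 * L + m)"
    using assms(5) by (simp add: ob_phase2_resps_def)
  also have "\<dots> = (ob_query \<epsilon> L (Suc (2 * L + m)) (resps (ob_query \<epsilon> L) x y (2 * L + m)) y \<le> x)"
    using assms(5) by (simp add: nth_resps)
  finally show ?thesis using ob_query_truthful[OF assms(1-4), of "2 * L + m" y] assms(5) by simp
qed

lemma one_div_le_mult_two_pow_ob_M:
  assumes "\<epsilon> > 0" "L \<ge> 1"
  shows "1 / real L \<le> \<epsilon> * 2 ^ ob_M \<epsilon> L"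
proof -
  have "1 / (\<epsilon> * real L) = 2 powr log 2 (1 / (\<epsilon> * real L))"
    using assms by simp
  also have "\<dots> \<le> 2 powr real (ob_M \<epsilon> L)"
    unfolding ob_M_def by (intro powr_mono) linarith+
  finally have "1 / (\<epsilon> * real L) \<le> 2 ^ ob_M \<epsilon> L" by (simp add: powr_realpow)
  moreover have "\<epsilon> * real L > 0" using assms by simp
  ultimately show ?thesis using assms by (simp add: pos_divide_le_eq mult_ac)
qed

lemma estimate_OB_accurate:
  assumes "\<epsilon> > 0" "L \<ge> 1" "0 \<le> x" "x < 1"
  shows "\<bar>estimate (OB \<epsilon> L) x y - x\<bar> \<le> \<epsilon> / 2"
proof -
  let ?rs = "resps (ob_query \<epsilon> L) x y (2 * L + ob_M \<epsilon> L)"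
  have est: "estimate (OB \<epsilon> L) x y = ob_est \<epsilon> L ?rs y"
    by (simp add: estimate_def OB_def)
  note cell = ob_cell_bounds[OF assms(2-4)]
  show ?thesis
  proof (cases "ob_guessed \<epsilon> L x")
    case True
    then have "estimate (OB \<epsilon> L) x y = real (ob_cell L x - 1) / L + \<epsilon> / 2"
      using assms by (simp add: est ob_est_def ob_in_guess_resps ob_j_resps)
    then show ?thesis using True cell(2) unfolding ob_guessed_def abs_le_iff by linarith
  next
    case False
    define bs where "bs = ob_phase2_resps \<epsilon> L x y"
    define J where "J = ob_sub \<epsilon> L (ob_cell L x)"
    have "\<not> ob_in_guess L ?rs" "ob_j L ?rs = ob_cell L x"
      using assms False by (simp_all add: ob_in_guess_resps ob_j_resps)
    then have estimate_eq: "estimate (OB \<epsilon> L) x y = midpt (bisect J bs)"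
      by (simp add: est ob_est_def bs_def J_def ob_phase2_resps_def)
    have J: "fst J \<le> x" "x < snd J" "snd J - fst J = 1 / L - \<epsilon>"
    proof -
      have "real (ob_cell L x - 1) = real (ob_cell L x) - 1" using cell(1) by simp
      then show "fst J \<le> x" "x < snd J" "snd J - fst J = 1 / L - \<epsilon>"
        using False cell(3) by (simp_all add: J_def ob_sub_def ob_guessed_def diff_divide_distrib)
    qed
    have "fst (bisect J bs) \<le> x \<and> x < snd (bisect J bs)"
      using ob_phase2_resps_truthful[OF assms(2-4) False] J(1,2)
      by (intro bisect_truthful_mem) (simp_all add: bs_def J_def)
    moreover have "snd (bisect J bs) - fst (bisect J bs) \<le> \<epsilon>"
    proof -
      have "snd J - fst J \<le> \<epsilon> * 2 ^ ob_M \<epsilon> L"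
        using one_div_le_mult_two_pow_ob_M[OF assms(1,2)] J(3) assms(1) by linarith
      then show ?thesis by (simp add: bisect_width bs_def pos_divide_le_eq)
    qed
    ultimately have "\<bar>midpt (bisect J bs) - x\<bar> \<le> \<epsilon> / 2" by (intro abs_midpt_diff_le) auto
    then show ?thesis unfolding estimate_eq .
  qed
qed

lemma one_le_nseeds_OB: "L \<ge> 1 \<Longrightarrow> 1 \<le> nseeds (OB \<epsilon> L)"
  by (simp add: OB_def)

lemma ob_seed_exists:
  assumes "i \<in> {1..L}" "length bs = M"
  shows "\<exists>y\<in>{1..L * 2 ^ M}. ob_subidx L y = i \<and> map (ob_Z L y) [1..<M + 1] = bs"
proof
  define n :: nat where "n = horner_sum of_bool 2 bs"
  have "n = take_bit M n"
    using assms(2) by (simp add: n_def take_bit_horner_sum_bit_eq)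
  then have n: "n < 2 ^ M" by (metis take_bit_nat_less_exp)
  let ?y = "i + L * n"
  have "?y \<le> L + L * (2 ^ M - 1)"
    using assms(1) n by (intro add_mono) auto
  also have "\<dots> = L * 2 ^ M" by (simp add: algebra_simps)
  finally show "?y \<in> {1..L * 2 ^ M}" using assms(1) by simp
  have y: "?y - 1 = (i - 1) + L * n" using assms(1) by auto
  have "i - 1 < L" using assms(1) by auto
  then have mod: "(?y - 1) mod L = i - 1" and div: "(?y - 1) div L = n"
    unfolding y by simp_all
  have "ob_subidx L ?y = i" unfolding ob_subidx_def mod using assms(1) by simp
  moreover have "ob_Z L ?y (Suc k) = bs ! k" if "k < M" for k
    unfolding ob_Z_def div using that assms(2)
    by (simp add: n_def bit_horner_sum_bit_iff flip: bit_iff_odd)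
  then have "map (ob_Z L ?y) [1..<M + 1] = bs"
    using assms(2) by (intro nth_equalityI) (simp_all del: upt_Suc)
  ultimately show "ob_subidx L ?y = i \<and> map (ob_Z L ?y) [1..<M + 1] = bs" ..
qed

lemma Qset_OB_ob_queries:
  assumes "L \<ge> 1" "0 \<le> x" "x < 1" "qb \<in> Qset (OB \<epsilon> L) x"
  obtains i bs where "i \<in> {1..L}" "length bs = ob_M \<epsilon> L" "qb = ob_queries \<epsilon> L i bs"
proof -
  obtain y where "qseq (OB \<epsilon> L) x y = qb"
    using assms(4) by (auto simp: Qset_iff[OF one_le_nseeds_OB[OF assms(1)]])
  show ?thesis
  proof (cases "ob_guessed \<epsilon> L x")
    case True
    show ?thesis
    proof (rule that)
      show "ob_subidx L y \<in> {1..L}" using assms(1) by (simp add: ob_subidx_def Suc_le_eq)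
      show "length (map (ob_Z L y) [1..<ob_M \<epsilon> L + 1]) = ob_M \<epsilon> L" by simp
      show "qb = ob_queries \<epsilon> L (ob_subidx L y) (map (ob_Z L y) [1..<ob_M \<epsilon> L + 1])"
        using qseq_OB_guessed[OF assms(1-3) True] \<open>_ = qb\<close> by simp
    qed
  next
    case False
    show ?thesis
    proof (rule that)
      show "ob_cell L x \<in> {1..L}" using ob_cell_bounds(1)[OF assms(1-3)] .
      show "length (ob_phase2_resps \<epsilon> L x y) = ob_M \<epsilon> L" by simp
      show "qb = ob_queries \<epsilon> L (ob_cell L x) (ob_phase2_resps \<epsilon> L x y)"
        using qseq_OB_truthful[OF assms(1-3) False] \<open>_ = qb\<close> by simp
    qed
  qed
qed

lemma ob_queries_in_Qset:
  assumes "L \<ge> 1" "0 \<le> x" "x < 1" "ob_guessed \<epsilon> L x"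
    and "i \<in> {1..L}" "length bs = ob_M \<epsilon> L"
  shows "ob_queries \<epsilon> L i bs \<in> Qset (OB \<epsilon> L) x"
proof -
  obtain y where y: "y \<in> {1..nseeds (OB \<epsilon> L)}" "ob_subidx L y = i"
      "map (ob_Z L y) [1..<ob_M \<epsilon> L + 1] = bs"
    using ob_seed_exists[OF assms(5,6)] by (auto simp: OB_def)
  then have "qseq (OB \<epsilon> L) x y = ob_queries \<epsilon> L i bs"
    using qseq_OB_guessed[OF assms(1-4)] by simp
  then show ?thesis using y(1) by (auto simp: Qset_iff[OF one_le_nseeds_OB[OF assms(1)]])
qed

lemma ob_guessed_subset_info_set:
  assumes "L \<ge> 1" "0 \<le> x" "x < 1" "qb \<in> Qset (OB \<epsilon> L) x"
  shows "{x'. 0 \<le> x' \<and> x' < 1 \<and> ob_guessed \<epsilon> L x'} \<subseteq> info_set (OB \<epsilon> L) qb"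
proof
  fix x' assume x': "x' \<in> {x'. 0 \<le> x' \<and> x' < 1 \<and> ob_guessed \<epsilon> L x'}"
  obtain i bs where "i \<in> {1..L}" "length bs = ob_M \<epsilon> L" "qb = ob_queries \<epsilon> L i bs"
    using Qset_OB_ob_queries[OF assms] .
  then show "x' \<in> info_set (OB \<epsilon> L) qb"
    using x' assms(1) by (simp add: info_set_def ob_queries_in_Qset)
qed

lemma scaled_nat_separated:
  fixes c d :: real
  assumes "0 \<le> d" "d < c" "k \<noteq> k'"
  shows "d < \<bar>real k * c - real k' * c\<bar>"
proof -
  have "1 \<le> \<bar>real k - real k'\<bar>" using assms(3) by (cases k k' rule: linorder_cases) auto
  then have "1 * c \<le> \<bar>real k - real k'\<bar> * c" using assms(1,2) by (intro mult_right_mono) auto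
  also have "\<dots> = \<bar>real k * c - real k' * c\<bar>"
    using assms(1,2) by (simp add: abs_mult left_diff_distrib [symmetric])
  finally show ?thesis using assms(2) by simp
qed

lemma ob_guessed_scaled_grid_point:
  assumes "\<epsilon> > 0" "L \<ge> 1" "\<epsilon> * L < 1" "k < L"
  defines "p \<equiv> real k * ((1 + \<epsilon>) / L)"
  shows "0 \<le> p" "p < 1" "ob_guessed \<epsilon> L p"
proof -
  have L: "real L > 0" using assms by simp
  have "real k * \<epsilon> < real L * \<epsilon>" using assms(1,4) by simp
  then have kL: "real k * \<epsilon> < 1" "real k + 1 \<le> real L" "real k * \<epsilon> < real L * \<epsilon>"
    using assms(3,4) by (simp_all add: mult.commute)
  have pL: "p * L = real k + real k * \<epsilon>"
    using L by (simp add: p_def field_simps)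
  then have "ob_cell L p = Suc k" using assms(1,2) kL(1) by (intro ob_cell_eqI) auto
  moreover have "(real k / L + \<epsilon>) * L = real k + real L * \<epsilon>"
    using L by (simp add: field_simps)
  then have "p * L < real L" "p * L < (real k / L + \<epsilon>) * L"
    using pL kL by linarith+
  then have "p < 1" "p < real k / L + \<epsilon>"
    using L by (simp_all add: mult_less_cancel_right2)
  ultimately show "0 \<le> p" "p < 1" "ob_guessed \<epsilon> L p"
    using assms(1) by (simp_all add: p_def ob_guessed_def)
qed

lemma ob_guessed_separated_points:
  assumes "\<epsilon> > 0" "L \<ge> 1" "\<epsilon> * L < 1"
  obtains P where "card P = L" "P \<subseteq> {x. 0 \<le> x \<and> x < 1 \<and> ob_guessed \<epsilon> L x}"
    "\<And>p q. p \<in> P \<Longrightarrow> q \<in> P \<Longrightarrow> p \<noteq> q \<Longrightarrow> 1 / L < \<bar>p - q\<bar>"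
proof
  \<comment> \<open>Scaling by 1 + eps separates the points by more than 1/L, and since k eps < 1 the
    k-th point still lies in the guess of cell k + 1.\<close>
  define p where "p k = real k * ((1 + \<epsilon>) / L)" for k :: nat
  have sep: "1 / L < \<bar>p k - p k'\<bar>" if "k \<noteq> k'" for k k'
    unfolding p_def using assms(1,2) that
    by (intro scaled_nat_separated) (simp_all add: divide_strict_right_mono)
  show "p ` {..<L} \<subseteq> {x. 0 \<le> x \<and> x < 1 \<and> ob_guessed \<epsilon> L x}"
    using ob_guessed_scaled_grid_point[OF assms] by (auto simp: p_def)
  show "\<And>a b. a \<in> p ` {..<L} \<Longrightarrow> b \<in> p ` {..<L} \<Longrightarrow> a \<noteq> b \<Longrightarrow> 1 / L < \<bar>a - b\<bar>"
    using sep by auto metis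
  have "inj_on p {..<L}"
  proof (rule inj_onI)
    fix k k' assume "p k = p k'"
    then show "k = k'" using sep[of k k'] assms(2) by fastforce
  qed
  then show "card (p ` {..<L}) = L" by (simp add: card_image)
qed

theorem proposition1:
  fixes \<epsilon> \<delta> :: real and L :: nat
  assumes "\<epsilon> > 0" and "\<delta> > 0" and "L \<ge> 2"
    and "2 * \<epsilon> < \<delta>" and "\<delta> \<le> 1 / real L"
  shows "is_private (OB \<epsilon> L) \<epsilon> \<delta> L"
proof -
  have L: "L \<ge> 1" using assms(3) by simp
  have "\<epsilon> * L < \<delta> * L" using assms(1,3,4) by (intro mult_strict_right_mono) auto
  also have "\<dots> \<le> 1" using assms(5) L by (simp add: le_divide_eq)
  finally obtain P where P: "card P = L" "P \<subseteq> {x. 0 \<le> x \<and> x < 1 \<and> ob_guessed \<epsilon> L x}"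
      "\<And>p q. p \<in> P \<Longrightarrow> q \<in> P \<Longrightarrow> p \<noteq> q \<Longrightarrow> 1 / L < \<bar>p - q\<bar>"
    using ob_guessed_separated_points[OF assms(1) L] by blast
  show ?thesis
    unfolding is_private_def
  proof (intro conjI allI impI ballI)
    fix x :: real assume "0 \<le> x \<and> x < 1"
    then show "measure_pmf.prob (seed_pmf (OB \<epsilon> L)) {y. \<bar>estimate (OB \<epsilon> L) x y - x\<bar> \<le> \<epsilon> / 2} = 1"
      using estimate_OB_accurate[OF assms(1) L]
      by (intro prob_seed_pmf_eq_1[OF one_le_nseeds_OB[OF L]]) auto
  next
    fix x :: real and qb assume "0 \<le> x \<and> x < 1" "qb \<in> Qset (OB \<epsilon> L) x"
    then have "P \<subseteq> info_set (OB \<epsilon> L) qb"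
      using ob_guessed_subset_info_set[OF L] P(2) by blast
    moreover have "info_set (OB \<epsilon> L) qb \<subseteq> {0..1}" by (auto simp: info_set_def)
    moreover have "\<delta> < \<bar>p - q\<bar>" if "p \<in> P" "q \<in> P" "p \<noteq> q" for p q
      using P(3)[OF that] assms(5) by linarith
    ultimately have "card P \<le> cover_num \<delta> (info_set (OB \<epsilon> L) qb)"
      by (intro card_separated_le_cover_num[OF assms(2)])
    then show "L \<le> cover_num \<delta> (info_set (OB \<epsilon> L) qb)" using P(1) by simp
  qed
qed

end
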